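(* Let $G=(g_{ij})$ be a Hermitian $4\times4$ matrix with $g_{ii}=0$, $g_{12}=g_{23}=g_{34}=1$, $|g_{13}|=1$, $g_{14}\ne0$, $g_{24}\ne0$ and $\det G=0$. If $\mathrm{Re}(g_{13})\le0$ and $\mathrm{Re}(g_{24}\overline{g}_{14})\le0$, then $\mathrm{Re}(g_{13}\overline{g}_{14})\le0$ and $\mathrm{Re}(\overline{g}_{24})\le0$. *)

theory Defs
  imports "HOL-Analysis.Analysis" "HOL-Library.Numeral_Type"
begin

definition hermitian_mat :: "complex^'n^'n \<Rightarrow> bool" where
  "hermitian_mat G \<longleftrightarrow> (\<forall>i j. G $ i $ j = cnj (G $ j $ i))"

end

theory Submission imports Defs begin

text \<open>Write a = g13, b = g14, c = g24. Expanding the determinant with the other entries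
  fixed gives det G = |b - 1 - ac|^2 - 4 Re a Re c, so det G = 0 says |r|^2 = 4 Re a Re c
  for r = b - 1 - ac. If Re c > 0 this forces r = 0 and Re a = 0, and then
  Re (c conj b) = Re c > 0, a contradiction. Hence Re a, Re c \<le> 0, so |r| \<le> -(Re a + Re c)
  by AM-GM, and with |a| = 1 we get Re (a conj b) = Re a + Re c + Re (a conj r) \<le> 0.\<close>

lemma det_4:
  "det (A::'a::comm_ring_1^4^4) =
    A$1$1 * A$2$2 * A$3$3 * A$4$4
    - A$1$1 * A$2$2 * A$3$4 * A$4$3
    - A$1$1 * A$2$3 * A$3$2 * A$4$4
    + A$1$1 * A$2$3 * A$3$4 * A$4$2
    + A$1$1 * A$2$4 * A$3$2 * A$4$3
    - A$1$1 * A$2$4 * A$3$3 * A$4$2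
    - A$1$2 * A$2$1 * A$3$3 * A$4$4
    + A$1$2 * A$2$1 * A$3$4 * A$4$3
    + A$1$2 * A$2$3 * A$3$1 * A$4$4
    - A$1$2 * A$2$3 * A$3$4 * A$4$1
    - A$1$2 * A$2$4 * A$3$1 * A$4$3
    + A$1$2 * A$2$4 * A$3$3 * A$4$1
    + A$1$3 * A$2$1 * A$3$2 * A$4$4
    - A$1$3 * A$2$1 * A$3$4 * A$4$2
    - A$1$3 * A$2$2 * A$3$1 * A$4$4
    + A$1$3 * A$2$2 * A$3$4 * A$4$1
    + A$1$3 * A$2$4 * A$3$1 * A$4$2
    - A$1$3 * A$2$4 * A$3$2 * A$4$1
    - A$1$4 * A$2$1 * A$3$2 * A$4$3
    + A$1$4 * A$2$1 * A$3$3 * A$4$2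
    + A$1$4 * A$2$2 * A$3$1 * A$4$3
    - A$1$4 * A$2$2 * A$3$3 * A$4$1
    - A$1$4 * A$2$3 * A$3$1 * A$4$2
    + A$1$4 * A$2$3 * A$3$2 * A$4$1"
proof -
  have ins_1: "finite {2::4, 3, 4}" "1 \<notin> {2::4, 3, 4}" by auto
  have ins_2: "finite {3::4, 4}" "2 \<notin> {3::4, 4}" by auto
  have ins_3: "finite {4::4}" "3 \<notin> {4::4}" by auto
  show ?thesis
    unfolding det_def UNIV_4
    unfolding sum_over_permutations_insert[OF ins_1]
    unfolding sum_over_permutations_insert[OF ins_2]
    unfolding sum_over_permutations_insert[OF ins_3]
    unfolding permutes_sing
    by (simp add: sign_swap_id permutation_swap_id sign_compose permutation_compose sign_id swap_id_eq algebra_simps)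
qed

lemma det_hermitian_zero_diag_unit_superdiag:
  fixes G :: "complex^4^4"
  assumes herm: "hermitian_mat G"
    and "\<forall>i. G $ i $ i = 0"
    and "G $ 1 $ 2 = 1" "G $ 2 $ 3 = 1" "G $ 3 $ 4 = 1"
  shows "det G = of_real ((cmod (G $ 1 $ 4 - 1 - G $ 1 $ 3 * G $ 2 $ 4))\<^sup>2
                          - 4 * Re (G $ 1 $ 3) * Re (G $ 2 $ 4))"
proof -
  let ?a = "G $ 1 $ 3" and ?b = "G $ 1 $ 4" and ?c = "G $ 2 $ 4"
  have cnj_entry: "G $ j $ i = cnj (G $ i $ j)" for i j
    using herm unfolding hermitian_mat_def by blast
  have "G $ 2 $ 1 = 1" "G $ 3 $ 2 = 1" "G $ 4 $ 3 = 1"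
    using assms(3-5) cnj_entry by (metis complex_cnj_one)+
  then have "det G = 1 - cnj ?b - ?c * cnj ?a - ?a * cnj ?c + ?a * ?c * cnj ?a * cnj ?c
                     - ?a * ?c * cnj ?b - ?b - ?b * cnj ?a * cnj ?c + ?b * cnj ?b"
    unfolding det_4 using assms cnj_entry[of 1 3] cnj_entry[of 1 4] cnj_entry[of 2 4]
    by (simp add: algebra_simps)
  also have "\<dots> = (?b - 1 - ?a * ?c) * cnj (?b - 1 - ?a * ?c) - (?a + cnj ?a) * (?c + cnj ?c)"
    by (simp add: algebra_simps)
  also have "\<dots> = of_real ((cmod (?b - 1 - ?a * ?c))\<^sup>2 - 4 * Re ?a * Re ?c)"
    unfolding of_real_diff complex_norm_square by (simp add: complex_add_cnj)
  finally show ?thesis .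
qed

lemma Re_mult_cnj_nonpos_if_cmod_sq_eq:
  fixes a b c :: complex
  assumes unit: "cmod a = 1"
    and sq: "(cmod (b - 1 - a * c))\<^sup>2 = 4 * Re a * Re c"
    and Re_a: "Re a \<le> 0"
    and Re_cb: "Re (c * cnj b) \<le> 0"
  shows "Re (a * cnj b) \<le> 0 \<and> Re c \<le> 0"
proof -
  define r where "r = b - 1 - a * c"
  have r_sq: "(cmod r)\<^sup>2 = 4 * Re a * Re c" using sq by (simp add: r_def)
  have a_cnj_a: "a * cnj a = 1" using unit by (simp flip: complex_norm_square)
  have b_eq: "b = 1 + a * c + r" by (simp add: r_def)
  have Re_c: "Re c \<le> 0"
  proof (rule ccontr)
    assume c_pos: "\<not> Re c \<le> 0"
    have "4 * Re a * Re c \<le> 0" using c_pos Re_a by (simp add: mult_nonpos_nonneg)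
    then have "(cmod r)\<^sup>2 = 0" "Re a * Re c = 0"
      using r_sq zero_le_power2[of "cmod r"] by linarith+
    then have "r = 0" "Re a = 0" using c_pos by auto
    have "c * cnj b = c + (c * cnj c) * cnj a" by (simp add: b_eq \<open>r = 0\<close> algebra_simps)
    then have "Re (c * cnj b) = Re c + (cmod c)\<^sup>2 * Re a" by (simp flip: complex_norm_square)
    then show False using c_pos \<open>Re a = 0\<close> Re_cb by simp
  qed
  have "a * cnj b = a + (a * cnj a) * cnj c + a * cnj r" by (simp add: b_eq algebra_simps)
  then have Re_ab: "Re (a * cnj b) = Re a + Re c + Re (a * cnj r)" by (simp add: a_cnj_a)
  have "Re (a * cnj r) \<le> cmod r"
    using complex_Re_le_cmod[of "a * cnj r"] unit by (simp add: norm_mult)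
  also have "cmod r \<le> - (Re a + Re c)"
  proof (rule power2_le_imp_le)
    show "(cmod r)\<^sup>2 \<le> (- (Re a + Re c))\<^sup>2"
      using r_sq zero_le_power2[of "Re a - Re c"] by (simp add: power2_eq_square algebra_simps)
    show "0 \<le> - (Re a + Re c)" using Re_a Re_c by simp
  qed
  finally show ?thesis using Re_ab Re_c by simp
qed

theorem corollary3p1:
  fixes G :: "complex^4^4"
  assumes herm: "hermitian_mat G"
    and diag: "\<forall>i. G $ i $ i = 0"
    and g12: "G $ 1 $ 2 = 1" and g23: "G $ 2 $ 3 = 1" and g34: "G $ 3 $ 4 = 1"
    and g13: "cmod (G $ 1 $ 3) = 1"
    and g14: "G $ 1 $ 4 \<noteq> 0" and g24: "G $ 2 $ 4 \<noteq> 0"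
    and detG: "det G = 0"
    and re13: "Re (G $ 1 $ 3) \<le> 0"
    and re2414: "Re (G $ 2 $ 4 * cnj (G $ 1 $ 4)) \<le> 0"
  shows "Re (G $ 1 $ 3 * cnj (G $ 1 $ 4)) \<le> 0 \<and> Re (cnj (G $ 2 $ 4)) \<le> 0"
proof -
  have "complex_of_real ((cmod (G $ 1 $ 4 - 1 - G $ 1 $ 3 * G $ 2 $ 4))\<^sup>2
                          - 4 * Re (G $ 1 $ 3) * Re (G $ 2 $ 4)) = 0"
    using det_hermitian_zero_diag_unit_superdiag[OF herm diag g12 g23 g34] detG by simp
  then have "(cmod (G $ 1 $ 4 - 1 - G $ 1 $ 3 * G $ 2 $ 4))\<^sup>2 = 4 * Re (G $ 1 $ 3) * Re (G $ 2 $ 4)"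
    by (simp only: of_real_eq_0_iff right_minus_eq)
  then show ?thesis
    using Re_mult_cnj_nonpos_if_cmod_sq_eq[OF g13 _ re13 re2414] by simp
qed

end
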